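(* Let $\ell>0$ and let $B\subset\mathbb R^d$ be a closed Euclidean ball of radius at least $3\ell d^2$ with $0\in\partial B$. Then there exists $z\in I$ such that $K_\ell(z)$ is contained in the interior of $B$.
   Context: $I:=\{z\in\mathbb Z^d:|z|_\infty=d\}$, where $|\cdot|_\infty$ is the sup norm; $K_\ell(z):=z\ell+[-\ell/2,\ell/2]^d$. *)

theory Defs
  imports "HOL-Analysis.Analysis"
begin

definition I_set :: "(real ^ 'n) set" where
  "I_set = {z. (\<forall>i. z $ i \<in> \<int>) \<and> infnorm z = real CARD('n)}"

definition K_cube :: "real \<Rightarrow> real ^ 'n \<Rightarrow> (real ^ 'n) set" where
  "K_cube l z = (\<lambda>y. l *\<^sub>R z + y) ` {y. \<forall>i. - l / 2 \<le> y $ i \<and> y $ i \<le> l / 2}"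

end

theory Submission
  imports Defs
begin

text \<open>Since \<open>0\<close> lies on the sphere, \<open>r = norm c \<le> d m\<close> with \<open>m = infnorm c\<close>, so \<open>m \<ge> 3 l d\<close>.
  Rounding \<open>v = (d/m) c\<close>, whose sup norm is \<open>d\<close>, gives a point \<open>z \<in> I\<close>: the coordinate with
  \<open>\<bar>v\<^sub>j\<bar> = d\<close> is already an integer and is kept exactly. Every point of \<open>K\<^sub>l(z)\<close> is within \<open>l\<close>
  of \<open>l v\<close> in each coordinate and within \<open>l/2\<close> at \<open>j\<close>, so by the \<open>\<ell>\<^sub>1\<close> bound \<open>K\<^sub>l(z)\<close> lies in the
  open ball of radius \<open>l d\<close> around \<open>l v = s c\<close>, where \<open>s = l d / m \<le> 1\<close>. The homothety with centre
  \<open>0 \<in> B\<close> and ratio \<open>s\<close> maps the interior of \<open>B\<close> into itself, and \<open>l d \<le> s r\<close> because \<open>m \<le> r\<close>.\<close>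

lemma ball_scaleR_subset_ball:
  fixes c :: "'a::real_normed_vector"
  assumes "norm c \<le> r" and "0 \<le> s" and "s \<le> 1"
  shows "ball (s *\<^sub>R c) (s * r) \<subseteq> ball c r"
proof
  fix p assume "p \<in> ball (s *\<^sub>R c) (s * r)"
  then have near: "norm (p - s *\<^sub>R c) < s * r"
    by (simp add: dist_norm norm_minus_commute)
  have "dist c p = norm ((p - s *\<^sub>R c) - (1 - s) *\<^sub>R c)"
    by (simp add: dist_norm norm_minus_commute algebra_simps)
  also have "\<dots> \<le> norm (p - s *\<^sub>R c) + (1 - s) * norm c"
    using norm_triangle_ineq4[of "p - s *\<^sub>R c" "(1 - s) *\<^sub>R c"] assms(3) by simp
  also have "\<dots> < s * r + (1 - s) * r"
    using near mult_left_mono[OF assms(1), of "1 - s"] assms(3) by simp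
  finally show "p \<in> ball c r" by (simp add: algebra_simps)
qed

lemma infnorm_Max_cart: "infnorm (x :: real ^ 'n) = Max (range (\<lambda>i. \<bar>x $ i\<bar>))"
proof -
  have "{\<bar>x $ i\<bar> |i. i \<in> UNIV} = range (\<lambda>i. \<bar>x $ i\<bar>)" by auto
  then show ?thesis by (simp add: infnorm_cart cSup_eq_Max)
qed

lemma infnorm_attained_cart:
  obtains j where "\<bar>x $ j\<bar> = infnorm (x :: real ^ 'n)"
proof -
  have "Max (range (\<lambda>i. \<bar>x $ i\<bar>)) \<in> range (\<lambda>i. \<bar>x $ i\<bar>)"
    by (intro Max_in) auto
  then obtain j where "\<bar>x $ j\<bar> = Max (range (\<lambda>i. \<bar>x $ i\<bar>))"
    by (metis (no_types, lifting) imageE)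
  then show ?thesis using that by (simp add: infnorm_Max_cart)
qed

lemma infnorm_le_cart: "(\<And>i. \<bar>x $ i\<bar> \<le> a) \<Longrightarrow> infnorm (x :: real ^ 'n) \<le> a"
  by (auto simp: infnorm_Max_cart)

lemma norm_le_card_infnorm: "norm (x :: real ^ 'n) \<le> real CARD('n) * infnorm x"
proof -
  have "real CARD('n) \<le> (real CARD('n))\<^sup>2"
    by (intro self_le_power) auto
  then have "sqrt (real CARD('n)) \<le> real CARD('n)"
    by (intro real_le_lsqrt) auto
  then have "sqrt (real CARD('n)) * infnorm x \<le> real CARD('n) * infnorm x"
    by (simp add: mult_right_mono infnorm_pos_le)
  then show ?thesis using norm_le_infnorm[of x] by simp
qed

lemma abs_round_le:
  fixes x :: real
  assumes "\<bar>x\<bar> \<le> of_int k"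
  shows "\<bar>round x\<bar> \<le> k"
proof -
  have "round x \<le> round (of_int k :: real)"
    using assms by (intro round_mono) simp
  moreover have "round (of_int (- k) :: real) \<le> round x"
    using assms by (intro round_mono) simp
  ultimately show ?thesis
    by (simp only: round_of_int abs_le_iff) simp
qed

lemma abs_in_Ints_iff: "\<bar>x\<bar> \<in> \<int> \<longleftrightarrow> (x :: 'a :: linordered_idom) \<in> \<int>"
  by (simp add: abs_if)

definition round_vec :: "real ^ 'n \<Rightarrow> real ^ 'n" where
  "round_vec v = (\<chi> i. of_int (round (v $ i)))"

lemma round_vec_nth_Ints: "round_vec v $ i \<in> \<int>"
  by (simp add: round_vec_def)

lemma round_vec_nth_dist: "\<bar>round_vec v $ i - v $ i\<bar> \<le> 1 / 2"
  using of_int_round_abs_le[of "v $ i"] by (simp add: round_vec_def)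

lemma round_vec_nth_Ints_eq: "v $ i \<in> \<int> \<Longrightarrow> round_vec v $ i = v $ i"
  by (auto simp: round_vec_def elim: Ints_cases)

lemma infnorm_round_vec:
  assumes "infnorm v \<in> \<int>"
  shows "infnorm (round_vec v) = infnorm v"
proof (rule antisym)
  obtain k where k: "infnorm v = of_int k" using assms by (auto elim: Ints_cases)
  have "\<bar>round_vec v $ i\<bar> \<le> of_int k" for i
    using abs_round_le[of "v $ i" k] component_le_infnorm_cart[of v i] k
    by (simp add: round_vec_def)
  then show "infnorm (round_vec v) \<le> infnorm v"
    using k by (simp add: infnorm_le_cart)
  obtain j where j: "\<bar>v $ j\<bar> = infnorm v" using infnorm_attained_cart .
  then have "v $ j \<in> \<int>"
    using assms abs_in_Ints_iff by metis
  then show "infnorm v \<le> infnorm (round_vec v)"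
    using j component_le_infnorm_cart[of "round_vec v" j] by (simp add: round_vec_nth_Ints_eq)
qed

lemma round_vec_in_I_set:
  assumes "infnorm v = real CARD('n)"
  shows "round_vec (v :: real ^ 'n) \<in> I_set"
  using assms infnorm_round_vec[of v] by (simp add: I_set_def round_vec_nth_Ints)

lemma K_cube_round_vec_subset_ball:
  fixes v :: "real ^ 'n"
  assumes "l > 0" and "v $ j \<in> \<int>"
  shows "K_cube l (round_vec v) \<subseteq> ball (l *\<^sub>R v) (l * CARD('n))"
proof
  fix p assume "p \<in> K_cube l (round_vec v)"
  then obtain y where y_box: "\<forall>i. - l / 2 \<le> y $ i \<and> y $ i \<le> l / 2"
    and p: "p = l *\<^sub>R round_vec v + y"
    unfolding K_cube_def by auto
  have y: "\<bar>y $ i\<bar> \<le> l / 2" for i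
  proof -
    have "- l / 2 \<le> y $ i" "y $ i \<le> l / 2" using y_box by auto
    then show ?thesis by (intro abs_leI) linarith+
  qed
  define w where "w = p - l *\<^sub>R v"
  have w: "w $ i = l * (round_vec v $ i - v $ i) + y $ i" for i
    by (simp add: w_def p algebra_simps)
  have "\<bar>w $ i\<bar> \<le> l" for i
  proof -
    have "\<bar>l * (round_vec v $ i - v $ i)\<bar> \<le> l / 2"
      using round_vec_nth_dist[of v i] assms(1) by (simp add: abs_mult)
    then show ?thesis using w[of i] y[of i] by linarith
  qed
  moreover have "\<bar>w $ j\<bar> < l"
    using w[of j] y[of j] assms by (simp add: round_vec_nth_Ints_eq)
  ultimately have "(\<Sum>i\<in>UNIV. \<bar>w $ i\<bar>) < (\<Sum>i\<in>(UNIV :: 'n set). l)"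
    by (intro sum_strict_mono_ex1) auto
  then have "norm w < l * CARD('n)"
    using norm_le_l1_cart[of w] by (simp add: mult.commute)
  then show "p \<in> ball (l *\<^sub>R v) (l * CARD('n))"
    by (simp add: w_def dist_norm norm_minus_commute)
qed

lemma infnorm_scaleR_to_infnorm:
  fixes c :: "real ^ 'n"
  assumes "c \<noteq> 0" and "a \<ge> 0"
  shows "infnorm ((a / infnorm c) *\<^sub>R c) = a"
  using assms by (simp add: infnorm_mul infnorm_eq_0 real_abs_infnorm)

lemma K_cube_round_vec_subset_ball_center:
  fixes l r :: real and c :: "real ^ 'n"
  assumes "l > 0" and "norm c \<le> r" and "l * real CARD('n) \<le> infnorm c"
  shows "K_cube l (round_vec ((CARD('n) / infnorm c) *\<^sub>R c)) \<subseteq> ball c r"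
proof -
  define d where "d = real CARD('n)"
  define m where "m = infnorm c"
  define v where "v = (d / m) *\<^sub>R c"
  define s where "s = l * d / m"
  have "l * d > 0"
    using assms(1) by (simp add: d_def)
  then have m_pos: "m > 0"
    using assms(3) by (simp add: m_def d_def)
  have "infnorm v = d"
    using m_pos by (simp add: v_def m_def d_def infnorm_scaleR_to_infnorm infnorm_pos_lt)
  then obtain j where "\<bar>v $ j\<bar> = d"
    using infnorm_attained_cart by metis
  then have "v $ j \<in> \<int>" using abs_in_Ints_iff by (metis Ints_of_nat d_def)
  then have "K_cube l (round_vec v) \<subseteq> ball (l *\<^sub>R v) (l * d)"
    using K_cube_round_vec_subset_ball[OF assms(1)] by (simp add: d_def)
  also have "l *\<^sub>R v = s *\<^sub>R c"
    by (simp add: v_def s_def)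
  also have "ball (s *\<^sub>R c) (l * d) \<subseteq> ball (s *\<^sub>R c) (s * r)"
    using infnorm_le_norm[of c] assms m_pos
    by (intro subset_ball) (simp add: s_def m_def d_def field_simps mult_left_mono)
  also have "\<dots> \<subseteq> ball c r"
    using assms m_pos by (intro ball_scaleR_subset_ball) (simp_all add: s_def m_def d_def)
  finally show ?thesis by (simp add: v_def d_def m_def)
qed

theorem lemma9p2:
  fixes l r :: real and c :: "real ^ 'n"
  assumes "l > 0"
    and "r \<ge> 3 * l * (real CARD('n))^2"
    and "0 \<in> frontier (cball c r)"
  shows "\<exists>z \<in> I_set. K_cube l z \<subseteq> interior (cball c r)"
proof -
  define d where "d = real CARD('n)"
  have d1: "d \<ge> 1" by (simp add: d_def)
  have ld_pos: "l * d > 0" using assms(1) d1 by simp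
  have norm_c: "norm c = r" using assms(3) by (simp add: dist_norm)
  have "3 * l * d^2 \<le> d * infnorm c"
    using assms(2) norm_le_card_infnorm[of c] norm_c by (simp add: d_def)
  then have "d * (3 * l * d) \<le> d * infnorm c"
    by (simp add: power2_eq_square algebra_simps)
  then have "3 * l * d \<le> infnorm c"
    using d1 by simp
  then have ld: "l * d \<le> infnorm c"
    using ld_pos by linarith
  then have "c \<noteq> 0"
    using ld_pos by (auto simp: infnorm_0)
  then have "round_vec ((d / infnorm c) *\<^sub>R c) \<in> I_set"
    using d1 by (intro round_vec_in_I_set) (simp add: infnorm_scaleR_to_infnorm d_def)
  moreover have "K_cube l (round_vec ((d / infnorm c) *\<^sub>R c)) \<subseteq> ball c r"
    using K_cube_round_vec_subset_ball_center[OF assms(1), of c r] norm_c ld by (simp add: d_def)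
  ultimately show ?thesis by auto
qed

end
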